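(* Let $\mathcal{N}=(Q,\Sigma,\Delta,q_0,F)$ be a one-counter net. If Eve wins the letter game on $\mathcal{N}$, then she has a winning strategy in the letter game that depends only on the current configuration and the letter chosen by Adam, i.e. given by a partial function $\sigma:(Q\times\mathbb{N})\times\Sigma\to\Delta$.
   Context: A one-counter net (OCN) is $\mathcal{N}=(Q,\Sigma,\Delta,q_0,F)$ with $Q$ finite, $\Sigma$ finite, $q_0\in Q$, $F\subseteq Q$, $\Delta\subseteq Q\times\Sigma\times\{-1,0,1\}\times Q$; configurations $(q,n)\in Q\times\mathbb{N}$, step $(q,n)\xrightarrow{a,d}(p,n+d)$ if $(q,a,d,p)\in\Delta$ and $n+d\ge0$; runs start at $(q_0,0)$ and are accepting if the last state is in $F$; $\mathcal{L}(\mathcal{N})$ is the set of words with an accepting run. Letter game: positions $(c,w)$, start $((q_0,0),\varepsilon)$; each round Adam picks $a\in\Sigma$, Eve picks a step $c\xrightarrow{a,d}c'$; if Eve has none and $wa$ is a prefix of a word of $\mathcal{L}(\mathcal{N})$ she loses; if $wa\in\mathcal{L}(\mathcal{N})$ but the state of $c'$ is not in $F$, Adam wins; otherwise continue from $(c',wa)$; Eve wins infinite plays. *)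

theory Defs
  imports Main
begin

type_synonym ('q,'a) transition = "'q \<times> 'a \<times> int \<times> 'q"
type_synonym 'q config = "'q \<times> nat"

record ('q,'a) ocn =
  states :: "'q set"
  alphabet :: "'a set"
  delta :: "('q,'a) transition set"
  init :: 'q
  final :: "'q set"

definition wf_ocn :: "('q,'a) ocn \<Rightarrow> bool" where
  "wf_ocn N \<longleftrightarrow> finite (states N) \<and> finite (alphabet N) \<and>
     delta N \<subseteq> states N \<times> alphabet N \<times> {-1, 0, 1} \<times> states N \<and>
     init N \<in> states N \<and> final N \<subseteq> states N"

text \<open>A step (q,n) -a,d-> (p,n+d) using transition t = (q,a,d,p) in Delta;
  the counter value n + d must be nonnegative (it is the natural number m).\<close>
definition ocn_step :: "('q,'a) ocn \<Rightarrow> 'q config \<Rightarrow> 'a \<Rightarrow> ('q,'a) transition \<Rightarrow> 'q config \<Rightarrow> bool" where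
  "ocn_step N c a t c' \<longleftrightarrow> t \<in> delta N \<and>
     (\<exists>d. t = (fst c, a, d, fst c') \<and> int (snd c') = int (snd c) + d)"

inductive ocn_run :: "('q,'a) ocn \<Rightarrow> 'a list \<Rightarrow> 'q config \<Rightarrow> bool" for N where
  run_Nil: "ocn_run N [] (init N, 0)"
| run_snoc: "ocn_run N w c \<Longrightarrow> ocn_step N c a t c' \<Longrightarrow> ocn_run N (w @ [a]) c'"

definition ocn_lang :: "('q,'a) ocn \<Rightarrow> 'a list set" where
  "ocn_lang N = {w. \<exists>c. ocn_run N w c \<and> fst c \<in> final N}"

definition is_prefix_of_lang :: "('q,'a) ocn \<Rightarrow> 'a list \<Rightarrow> bool" where
  "is_prefix_of_lang N w \<longleftrightarrow> (\<exists>v. w @ v \<in> ocn_lang N)"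

text \<open>Since Eve's earlier choices are
  determined by her strategy and the letters, this covers all (history-dependent) strategies.\<close>
type_synonym ('q,'a) strategy = "'a list \<Rightarrow> 'q config \<Rightarrow> 'a \<Rightarrow> ('q,'a) transition option"

inductive game_reach :: "('q,'a) ocn \<Rightarrow> ('q,'a) strategy \<Rightarrow> 'a list \<Rightarrow> 'q config \<Rightarrow> bool"
  for N s where
  reach_Nil: "game_reach N s [] (init N, 0)"
| reach_snoc: "game_reach N s w c \<Longrightarrow> a \<in> alphabet N \<Longrightarrow> s w c a = Some t \<Longrightarrow>
     ocn_step N c a t c' \<Longrightarrow> game_reach N s (w @ [a]) c'"

definition adam_wins_against :: "('q,'a) ocn \<Rightarrow> ('q,'a) strategy \<Rightarrow> bool" where
  "adam_wins_against N s \<longleftrightarrow> (\<exists>w c a. game_reach N s w c \<and> a \<in> alphabet N \<and>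
     ((\<not> (\<exists>t c'. s w c a = Some t \<and> ocn_step N c a t c') \<and> is_prefix_of_lang N (w @ [a])) \<or>
      (\<exists>t c'. s w c a = Some t \<and> ocn_step N c a t c' \<and> w @ [a] \<in> ocn_lang N \<and> fst c' \<notin> final N)))"

definition winning_strategy :: "('q,'a) ocn \<Rightarrow> ('q,'a) strategy \<Rightarrow> bool" where
  "winning_strategy N s \<longleftrightarrow> \<not> adam_wins_against N s"

definition eve_wins_letter_game :: "('q,'a) ocn \<Rightarrow> bool" where
  "eve_wins_letter_game N \<longleftrightarrow> (\<exists>s. winning_strategy N s)"

definition positional :: "('q config \<Rightarrow> 'a \<Rightarrow> ('q,'a) transition option) \<Rightarrow> ('q,'a) strategy" where
  "positional \<sigma> = (\<lambda>w c a. \<sigma> c a)"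

end

theory Submission
  imports Defs
begin

text \<open>Once Eve plays a winning strategy s, the words that may still be completed into the
  language after a history w reaching configuration c are exactly the words accepted from c:
  s must answer every letter Adam can still complete and must end in F on every accepted word.
  So whether a move at (w, c) loses depends only on c, and Eve may play at c what s plays
  after any fixed history leading to c.\<close>

inductive ocn_run_from :: "('q,'a) ocn \<Rightarrow> 'q config \<Rightarrow> 'a list \<Rightarrow> 'q config \<Rightarrow> bool"
  for N where
  run_from_Nil: "ocn_run_from N c [] c"
| run_from_Cons: "ocn_step N c a t c1 \<Longrightarrow> ocn_run_from N c1 u c2 \<Longrightarrow> ocn_run_from N c (a # u) c2"

definition ocn_lang_from :: "('q,'a) ocn \<Rightarrow> 'q config \<Rightarrow> 'a list set" where
  "ocn_lang_from N c = {u. \<exists>c'. ocn_run_from N c u c' \<and> fst c' \<in> final N}"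

definition losing_move ::
    "('q,'a) ocn \<Rightarrow> 'q config \<Rightarrow> 'a \<Rightarrow> ('q,'a) transition option \<Rightarrow> bool" where
  "losing_move N c a m \<longleftrightarrow>
     (\<not> (\<exists>t c'. m = Some t \<and> ocn_step N c a t c') \<and> (\<exists>v. a # v \<in> ocn_lang_from N c)) \<or>
     (\<exists>t c'. m = Some t \<and> ocn_step N c a t c' \<and> [a] \<in> ocn_lang_from N c \<and> fst c' \<notin> final N)"

text \<open>The choice is arbitrary at configurations that no play consistent with s reaches;
  the positional strategy never visits those.\<close>
definition some_history :: "('q,'a) ocn \<Rightarrow> ('q,'a) strategy \<Rightarrow> 'q config \<Rightarrow> 'a list" where
  "some_history N s c = (SOME w. game_reach N s w c)"

definition positional_of ::
    "('q,'a) ocn \<Rightarrow> ('q,'a) strategy \<Rightarrow> 'q config \<Rightarrow> 'a \<Rightarrow> ('q,'a) transition option" where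
  "positional_of N s c a =
     (case s (some_history N s c) c a of
        Some t \<Rightarrow> if t \<in> delta N then Some t else None
      | None \<Rightarrow> None)"

lemma ocn_run_append_run_from:
  assumes "ocn_run_from N c u c'" and "ocn_run N w c"
  shows "ocn_run N (w @ u) c'"
  using assms
proof (induction arbitrary: w rule: ocn_run_from.induct)
  case (run_from_Nil c)
  then show ?case by simp
next
  case (run_from_Cons c a t c1 u c2)
  have "ocn_run N (w @ [a]) c1"
    using run_from_Cons.prems run_from_Cons.hyps(1) by (rule run_snoc)
  then show ?case using run_from_Cons.IH by fastforce
qed

lemma ocn_run_Nil_imp_init: "ocn_run N [] c \<Longrightarrow> c = (init N, 0)"
  by (cases rule: ocn_run.cases) auto

lemma ocn_run_alphabet:
  assumes "wf_ocn N" and "ocn_run N w c"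
  shows "set w \<subseteq> alphabet N"
  using assms(2) by induction (use assms(1) in \<open>auto simp: wf_ocn_def ocn_step_def\<close>)

lemma game_reach_imp_ocn_run: "game_reach N s w c \<Longrightarrow> ocn_run N w c"
  by (induction rule: game_reach.induct) (auto intro: ocn_run.intros)

lemma winning_strategy_moves:
  assumes "winning_strategy N s" and "game_reach N s w c" and "a \<in> alphabet N"
    and "is_prefix_of_lang N (w @ [a])"
  obtains t c' where "s w c a = Some t" and "ocn_step N c a t c'"
  using assms unfolding winning_strategy_def adam_wins_against_def by blast

lemma winning_strategy_reach_final:
  assumes "winning_strategy N s" and "game_reach N s w c" and "w \<in> ocn_lang N"
  shows "fst c \<in> final N"
  using assms(2)
proof cases
  case reach_Nil
  then show ?thesis
    using assms(3) ocn_run_Nil_imp_init by (fastforce simp: ocn_lang_def)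
next
  case (reach_snoc w0 c0 a t)
  then show ?thesis
    using assms(1,3) unfolding winning_strategy_def adam_wins_against_def by blast
qed

lemma winning_strategy_residual_subset:
  assumes "wf_ocn N" and "winning_strategy N s"
    and "game_reach N s w c" and "w @ u \<in> ocn_lang N"
  shows "u \<in> ocn_lang_from N c"
  using assms(3,4)
proof (induction u arbitrary: w c)
  case Nil
  then have "fst c \<in> final N"
    using winning_strategy_reach_final[OF assms(2)] by simp
  then show ?case
    unfolding ocn_lang_from_def using run_from_Nil by blast
next
  case (Cons a u)
  have "a \<in> alphabet N"
    using Cons.prems(2) ocn_run_alphabet[OF assms(1)] by (fastforce simp: ocn_lang_def)
  moreover have "is_prefix_of_lang N (w @ [a])"
    using Cons.prems(2) by (auto simp: is_prefix_of_lang_def)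
  ultimately obtain t c1 where move: "s w c a = Some t" and step: "ocn_step N c a t c1"
    using winning_strategy_moves[OF assms(2) Cons.prems(1)] by blast
  have "game_reach N s (w @ [a]) c1"
    using Cons.prems(1) \<open>a \<in> alphabet N\<close> move step by (rule reach_snoc)
  then have "u \<in> ocn_lang_from N c1"
    using Cons.IH Cons.prems(2) by simp
  with step show ?case
    by (auto simp: ocn_lang_from_def intro: run_from_Cons)
qed

lemma winning_strategy_residual:
  assumes "wf_ocn N" and "winning_strategy N s" and "game_reach N s w c"
  shows "{u. w @ u \<in> ocn_lang N} = ocn_lang_from N c"
proof
  show "{u. w @ u \<in> ocn_lang N} \<subseteq> ocn_lang_from N c"
    using winning_strategy_residual_subset[OF assms] by blast
  show "ocn_lang_from N c \<subseteq> {u. w @ u \<in> ocn_lang N}"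
  proof
    fix u
    assume "u \<in> ocn_lang_from N c"
    then obtain c' where "ocn_run_from N c u c'" and "fst c' \<in> final N"
      by (auto simp: ocn_lang_from_def)
    moreover have "ocn_run N w c"
      using assms(3) by (rule game_reach_imp_ocn_run)
    ultimately show "u \<in> {u. w @ u \<in> ocn_lang N}"
      unfolding ocn_lang_def using ocn_run_append_run_from by blast
  qed
qed

lemma winning_strategy_iff_no_losing_move:
  assumes "\<And>w c. game_reach N s w c \<Longrightarrow> {u. w @ u \<in> ocn_lang N} = ocn_lang_from N c"
  shows "winning_strategy N s \<longleftrightarrow>
    (\<forall>w c a. game_reach N s w c \<longrightarrow> a \<in> alphabet N \<longrightarrow> \<not> losing_move N c a (s w c a))"
proof -
  have "is_prefix_of_lang N (w @ [a]) \<longleftrightarrow> (\<exists>v. a # v \<in> ocn_lang_from N c)"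
    and "w @ [a] \<in> ocn_lang N \<longleftrightarrow> [a] \<in> ocn_lang_from N c"
    if "game_reach N s w c" for w c a
    using assms[OF that] by (auto simp: is_prefix_of_lang_def)
  then show ?thesis
    unfolding winning_strategy_def adam_wins_against_def losing_move_def by blast
qed

lemma winning_strategy_no_losing_move:
  assumes "wf_ocn N" and "winning_strategy N s"
    and "game_reach N s w c" and "a \<in> alphabet N"
  shows "\<not> losing_move N c a (s w c a)"
proof -
  have "winning_strategy N s \<longleftrightarrow>
    (\<forall>w c a. game_reach N s w c \<longrightarrow> a \<in> alphabet N \<longrightarrow> \<not> losing_move N c a (s w c a))"
    by (rule winning_strategy_iff_no_losing_move) (rule winning_strategy_residual[OF assms(1,2)])
  with assms(2-4) show ?thesis
    by blast
qed

lemma positional_of_in_delta: "positional_of N s c a = Some t \<Longrightarrow> t \<in> delta N"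
  by (auto simp: positional_of_def split: option.splits if_splits)

text \<open>Filtering out transitions outside the net only replaces an illegal move by another one.\<close>
lemma losing_move_positional_of:
  "losing_move N c a (positional_of N s c a) \<longleftrightarrow>
   losing_move N c a (s (some_history N s c) c a)"
  by (auto simp: losing_move_def positional_of_def ocn_step_def split: option.splits)

lemma game_reach_positional_of:
  assumes "wf_ocn N" and "winning_strategy N s"
    and "game_reach N (positional (positional_of N s)) w c"
  shows "game_reach N s (some_history N s c) c \<and> {u. w @ u \<in> ocn_lang N} = ocn_lang_from N c"
  using assms(3)
proof (induction rule: game_reach.induct)
  case reach_Nil
  have "game_reach N s [] (init N, 0)"
    by (rule game_reach.reach_Nil)
  moreover from this have "game_reach N s (some_history N s (init N, 0)) (init N, 0)"
    unfolding some_history_def by (rule someI)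
  ultimately show ?case
    using winning_strategy_residual[OF assms(1,2)] by blast
next
  case (reach_snoc w c a t c')
  have "s (some_history N s c) c a = Some t"
    using reach_snoc.hyps(3)
    by (auto simp: positional_def positional_of_def split: option.splits if_splits)
  then have history: "game_reach N s (some_history N s c @ [a]) c'"
    using reach_snoc.IH reach_snoc.hyps(2,4) by (blast intro: game_reach.reach_snoc)
  then have "game_reach N s (some_history N s c') c'"
    unfolding some_history_def by (rule someI)
  moreover have "{u. (w @ [a]) @ u \<in> ocn_lang N} = {u. a # u \<in> ocn_lang_from N c}"
    using reach_snoc.IH by (simp add: set_eq_iff)
  moreover have "\<dots> = {u. (some_history N s c @ [a]) @ u \<in> ocn_lang N}"
    using winning_strategy_residual[OF assms(1,2) reach_snoc.IH[THEN conjunct1]]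
    by (simp add: set_eq_iff)
  moreover have "\<dots> = ocn_lang_from N c'"
    using winning_strategy_residual[OF assms(1,2) history] .
  ultimately show ?case
    by simp
qed

lemma winning_strategy_positional_of:
  assumes "wf_ocn N" and "winning_strategy N s"
  shows "winning_strategy N (positional (positional_of N s))"
proof -
  have residual: "{u. w @ u \<in> ocn_lang N} = ocn_lang_from N c"
    if "game_reach N (positional (positional_of N s)) w c" for w c
    using game_reach_positional_of[OF assms that] by (rule conjunct2)
  have "\<not> losing_move N c a (positional (positional_of N s) w c a)"
    if "game_reach N (positional (positional_of N s)) w c" and "a \<in> alphabet N" for w c a
  proof -
    have "game_reach N s (some_history N s c) c"
      using game_reach_positional_of[OF assms that(1)] by (rule conjunct1)
    then have "\<not> losing_move N c a (s (some_history N s c) c a)"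
      using winning_strategy_no_losing_move[OF assms] that(2) by blast
    then show ?thesis
      by (simp add: positional_def losing_move_positional_of)
  qed
  then show ?thesis
    by (subst winning_strategy_iff_no_losing_move[OF residual]) auto
qed

theorem proposition2:
  fixes N :: "('q,'a) ocn"
  assumes "wf_ocn N"
    and "eve_wins_letter_game N"
  shows "\<exists>\<sigma> :: 'q config \<Rightarrow> 'a \<Rightarrow> ('q,'a) transition option.
           (\<forall>c a t. \<sigma> c a = Some t \<longrightarrow> t \<in> delta N) \<and>
           winning_strategy N (positional \<sigma>)"
proof -
  from assms(2) obtain s where "winning_strategy N s"
    unfolding eve_wins_letter_game_def by blast
  then have "winning_strategy N (positional (positional_of N s))"
    using assms(1) winning_strategy_positional_of by blast
  moreover have "\<forall>c a t. positional_of N s c a = Some t \<longrightarrow> t \<in> delta N"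
    by (intro allI impI) (rule positional_of_in_delta)
  ultimately show ?thesis
    by (intro exI[of _ "positional_of N s"] conjI)
qed

end
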